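(* Let $G$ be a finite simple graph, let $s\ge1$ and let $e_1,\ldots,e_s$ be edges of $G$, not necessarily distinct. Suppose $(I(G)^{s+1}:e_1\cdots e_s)$ is a squarefree monomial ideal. Then for each $1\le i\le s$, \[(I(G)^{s+1}:e_1\cdots e_s)=\Big((I(G)^2:e_i)^s:\prod_{j\neq i}e_j\Big).\]
   Context: $I(G)=(uv\mid\{u,v\}\in E(G))\subseteq K[V(G)]$ is the edge ideal over a field $K$; each edge $e=\{a,b\}$ is identified with the monomial $ab$. *)

theory Defs
  imports "HOL-Library.Poly_Mapping"
begin

type_synonym ('v, 'k) mpoly = "('v \<Rightarrow>\<^sub>0 nat) \<Rightarrow>\<^sub>0 'k"

definition ideal_gen :: "'a::comm_ring_1 set \<Rightarrow> 'a set" where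
  "ideal_gen S = {x. \<exists>F f. finite F \<and> F \<subseteq> S \<and> x = (\<Sum>g\<in>F. f g * g)}"

definition ideal_pow :: "'a::comm_ring_1 set \<Rightarrow> nat \<Rightarrow> 'a set" where
  "ideal_pow I k = ideal_gen {prod_list xs | xs. length xs = k \<and> set xs \<subseteq> I}"

definition colon :: "'a::comm_ring_1 set \<Rightarrow> 'a \<Rightarrow> 'a set" where
  "colon I f = {g. g * f \<in> I}"

definition monom1 :: "('v \<Rightarrow>\<^sub>0 nat) \<Rightarrow> ('v, 'k::comm_ring_1) mpoly" where
  "monom1 \<alpha> = Poly_Mapping.single \<alpha> 1"

definition squarefree_monomial_ideal :: "('v, 'k::comm_ring_1) mpoly set \<Rightarrow> bool" where
  "squarefree_monomial_ideal J \<longleftrightarrow>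
     (\<exists>A. (\<forall>\<alpha>\<in>A. \<forall>v. Poly_Mapping.lookup \<alpha> v \<le> 1) \<and> J = ideal_gen (monom1 ` A))"

definition simple_graph :: "'v set set \<Rightarrow> bool" where
  "simple_graph E \<longleftrightarrow> (\<forall>e\<in>E. card e = 2)"

definition edge_mon :: "'v set \<Rightarrow> ('v, 'k::comm_ring_1) mpoly" where
  "edge_mon e = monom1 (\<Sum>v\<in>e. Poly_Mapping.single v 1)"

definition edge_ideal :: "'v set set \<Rightarrow> ('v, 'k::comm_ring_1) mpoly set" where
  "edge_ideal E = ideal_gen (edge_mon ` E)"

end

theory Submission
  imports Defs "HOL-Library.Function_Algebras" "HOL-Library.Multiset"
begin

(* Monomial ideals correspond to up-closed sets of exponent vectors, and the edge ideal,
   its powers and colons by monomials are all computed on exponents, so the theorem becomes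
   a statement about multisets of edges. Write e_i = ab and P for the multiset of the other
   e_j. The inclusion from left to right holds for every graph: among s+1 edges whose product
   divides f ab \<Prod>P, either one can be discarded, or two of them, ax and by, combine into
   the generator xy of (I^2 : ab).
   For the converse, squarefreeness keeps every x^2 out of the left-hand side, because x
   itself has too small a degree to lie there. Each generator of (I^2 : ab) is a multiple of
   uv, where u and v are the ends of an edge or of a path u-a-b-v. Starting from s such walks,
   the edges of P are absorbed one at a time: a walk is dropped, or two walks are concatenated
   along the absorbed edge; a closed walk would put some x^2 into the left-hand side. One walk
   whose ends divide f survives, and together with P and ab it places f in the left-hand side. *)

lemma lookup_plus: "Poly_Mapping.lookup (\<alpha> + \<beta>) = Poly_Mapping.lookup \<alpha> + Poly_Mapping.lookup \<beta>"
  by (rule ext) (simp add: lookup_add)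

lemma ex_lookup_eq: "\<exists>\<beta>::'v::finite \<Rightarrow>\<^sub>0 nat. Poly_Mapping.lookup \<beta> = f"
  by (rule exI[of _ "Abs_poly_mapping f"]) simp

lemma poly_mapping_expansion:
  "p = (\<Sum>\<beta>\<in>Poly_Mapping.keys p. Poly_Mapping.single \<beta> (Poly_Mapping.lookup p \<beta>))"
  by (rule poly_mapping_eqI) (auto simp: lookup_sum lookup_single when_def in_keys_iff)

lemma lookup_mult_single_add:
  fixes g :: "('a::cancel_comm_monoid_add) \<Rightarrow>\<^sub>0 ('b::comm_semiring_1)"
  shows "Poly_Mapping.lookup (g * Poly_Mapping.single \<gamma> 1) (\<beta> + \<gamma>) = Poly_Mapping.lookup g \<beta>"
proof -
  have inner: "(\<Sum>q. Poly_Mapping.lookup (Poly_Mapping.single \<gamma> 1) q when \<beta> + \<gamma> = l + q)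
      = (1 when l = \<beta>)" for l :: 'a
  proof -
    have shift: "(\<lambda>q. Poly_Mapping.lookup (Poly_Mapping.single \<gamma> 1) q when \<beta> + \<gamma> = l + q)
        = (\<lambda>q. (1 when l = \<beta>) when q = \<gamma>)"
      by (auto simp: lookup_single when_def fun_eq_iff)
    show ?thesis unfolding shift by (rule Sum_any_when_equal)
  qed
  show ?thesis unfolding lookup_mult inner by (simp add: mult_when)
qed

lemma keys_mult_single:
  fixes g :: "('a::cancel_comm_monoid_add) \<Rightarrow>\<^sub>0 ('b::comm_semiring_1)"
  shows "Poly_Mapping.keys (g * Poly_Mapping.single \<gamma> 1) = (\<lambda>\<beta>. \<beta> + \<gamma>) ` Poly_Mapping.keys g"
proof (intro equalityI subsetI)
  fix k assume "k \<in> Poly_Mapping.keys (g * Poly_Mapping.single \<gamma> 1)"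
  then obtain \<beta> where "k = \<beta> + \<gamma>" "\<beta> \<in> Poly_Mapping.keys g"
    using keys_mult[of g "Poly_Mapping.single \<gamma> 1"] by (auto split: if_splits)
  then show "k \<in> (\<lambda>\<beta>. \<beta> + \<gamma>) ` Poly_Mapping.keys g"
    by (auto simp: in_keys_iff lookup_mult_single_add)
qed (auto simp: in_keys_iff lookup_mult_single_add)

lemma ideal_gen_zero: "0 \<in> ideal_gen S"
  unfolding ideal_gen_def by (rule CollectI, rule exI[of _ "{}"]) auto

lemma ideal_gen_base: "g \<in> S \<Longrightarrow> g \<in> ideal_gen S"
  unfolding ideal_gen_def by (rule CollectI, rule exI[of _ "{g}"], rule exI[of _ "\<lambda>_. 1"]) auto

lemma ideal_gen_add:
  assumes "x \<in> ideal_gen S" "y \<in> ideal_gen S"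
  shows "x + y \<in> ideal_gen S"
proof -
  obtain F f where F: "finite F" "F \<subseteq> S" "x = (\<Sum>g\<in>F. f g * g)"
    using assms(1) unfolding ideal_gen_def by blast
  obtain G h where G: "finite G" "G \<subseteq> S" "y = (\<Sum>g\<in>G. h g * g)"
    using assms(2) unfolding ideal_gen_def by blast
  define c where "c g = (if g \<in> F then f g else 0) + (if g \<in> G then h g else 0)" for g
  have "(\<Sum>g\<in>F \<union> G. (if g \<in> F then f g else 0) * g) = x"
    unfolding F(3) by (rule sum.mono_neutral_cong_right) (use F G in auto)
  moreover have "(\<Sum>g\<in>F \<union> G. (if g \<in> G then h g else 0) * g) = y"
    unfolding G(3) by (rule sum.mono_neutral_cong_right) (use F G in auto)
  ultimately have "x + y = (\<Sum>g\<in>F \<union> G. c g * g)"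
    by (simp add: c_def distrib_right sum.distrib)
  then show ?thesis
    unfolding ideal_gen_def using F G by (intro CollectI exI[of _ "F \<union> G"] exI[of _ c]) auto
qed

lemma ideal_gen_mult:
  assumes "x \<in> ideal_gen S"
  shows "h * x \<in> ideal_gen S"
proof -
  obtain F f where F: "finite F" "F \<subseteq> S" "x = (\<Sum>g\<in>F. f g * g)"
    using assms unfolding ideal_gen_def by blast
  have "h * x = (\<Sum>g\<in>F. (h * f g) * g)"
    using F by (simp add: sum_distrib_left mult.assoc)
  then show ?thesis
    unfolding ideal_gen_def using F by (intro CollectI exI[of _ F] exI[of _ "\<lambda>g. h * f g"]) auto
qed

lemma ideal_gen_sum:
  "finite F \<Longrightarrow> (\<And>i. i \<in> F \<Longrightarrow> f i \<in> ideal_gen S) \<Longrightarrow> sum f F \<in> ideal_gen S"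
  by (induction F rule: finite_induct) (auto intro: ideal_gen_zero ideal_gen_add)

lemma ideal_gen_least:
  assumes "0 \<in> I" "\<And>x y. x \<in> I \<Longrightarrow> y \<in> I \<Longrightarrow> x + y \<in> I" "\<And>x h. x \<in> I \<Longrightarrow> h * x \<in> I"
    and "T \<subseteq> I"
  shows "ideal_gen T \<subseteq> I"
proof
  fix x assume "x \<in> ideal_gen T"
  then obtain F f where F: "finite F" "F \<subseteq> T" "x = (\<Sum>g\<in>F. f g * g)"
    unfolding ideal_gen_def by blast
  have "(\<Sum>g\<in>F. f g * g) \<in> I"
    using F(1,2) by (induction F rule: finite_induct) (use assms in auto)
  then show "x \<in> I" using F by simp
qed

lemma ideal_gen_subset: "T \<subseteq> ideal_gen S \<Longrightarrow> ideal_gen T \<subseteq> ideal_gen S"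
  by (rule ideal_gen_least) (auto intro: ideal_gen_zero ideal_gen_add ideal_gen_mult)

section \<open>Monomial ideals as up-closed sets of exponent vectors\<close>

definition mono_ideal :: "('v \<Rightarrow> nat) set \<Rightarrow> ('v, 'k::comm_ring_1) mpoly set" where
  "mono_ideal U = {p. \<forall>\<beta>\<in>Poly_Mapping.keys p. Poly_Mapping.lookup \<beta> \<in> U}"

definition up_closed :: "('v \<Rightarrow> nat) set \<Rightarrow> bool" where
  "up_closed U \<longleftrightarrow> (\<forall>f g. f \<in> U \<longrightarrow> f \<le> g \<longrightarrow> g \<in> U)"

definition up_closure :: "('v \<Rightarrow>\<^sub>0 nat) set \<Rightarrow> ('v \<Rightarrow> nat) set" where
  "up_closure A = {f. \<exists>\<alpha>\<in>A. Poly_Mapping.lookup \<alpha> \<le> f}"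

lemma up_closed_up_closure: "up_closed (up_closure A)"
  unfolding up_closed_def up_closure_def using order_trans by blast

lemma mono_ideal_zero: "0 \<in> mono_ideal U"
  by (simp add: mono_ideal_def)

lemma mono_ideal_add: "x \<in> mono_ideal U \<Longrightarrow> y \<in> mono_ideal U \<Longrightarrow> x + y \<in> mono_ideal U"
  unfolding mono_ideal_def using keys_add[of x y] by blast

lemma mono_ideal_mult:
  assumes "up_closed U" "x \<in> mono_ideal U"
  shows "h * x \<in> mono_ideal U"
  unfolding mono_ideal_def
proof (intro CollectI ballI)
  fix k assume "k \<in> Poly_Mapping.keys (h * x)"
  then obtain \<alpha> \<beta> where k: "k = \<alpha> + \<beta>" "\<beta> \<in> Poly_Mapping.keys x"
    using keys_mult by blast
  then have "Poly_Mapping.lookup \<beta> \<in> U"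
    using assms(2) unfolding mono_ideal_def by blast
  moreover have "Poly_Mapping.lookup \<beta> \<le> Poly_Mapping.lookup k"
    by (simp add: k lookup_plus le_fun_def)
  ultimately show "Poly_Mapping.lookup k \<in> U"
    using assms(1) unfolding up_closed_def by blast
qed

lemma ideal_gen_subset_mono_ideal: "up_closed U \<Longrightarrow> T \<subseteq> mono_ideal U \<Longrightarrow> ideal_gen T \<subseteq> mono_ideal U"
  by (rule ideal_gen_least) (auto intro: mono_ideal_zero mono_ideal_add mono_ideal_mult)

lemma monom1_in_mono_ideal [simp]:
  "(monom1 \<beta> :: ('v, 'k::comm_ring_1) mpoly) \<in> mono_ideal U \<longleftrightarrow> Poly_Mapping.lookup \<beta> \<in> U"
  by (simp add: mono_ideal_def monom1_def)

lemma monom1_add: "monom1 (\<alpha> + \<beta>) = (monom1 \<alpha> * monom1 \<beta> :: ('v, 'k::comm_ring_1) mpoly)"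
  by (simp add: monom1_def mult_single)

lemma prod_list_monom1: "prod_list (map monom1 xs) = (monom1 (sum_list xs) :: ('v, 'k::comm_ring_1) mpoly)"
  by (induction xs) (simp_all add: monom1_add, simp add: monom1_def)

lemma ideal_gen_monom1: "ideal_gen (monom1 ` A :: ('v, 'k::comm_ring_1) mpoly set) = mono_ideal (up_closure A)"
proof
  show "ideal_gen (monom1 ` A) \<subseteq> (mono_ideal (up_closure A) :: ('v, 'k) mpoly set)"
    by (rule ideal_gen_subset_mono_ideal[OF up_closed_up_closure]) (auto simp: up_closure_def)
next
  show "mono_ideal (up_closure A) \<subseteq> (ideal_gen (monom1 ` A) :: ('v, 'k) mpoly set)"
  proof
    fix p :: "('v, 'k) mpoly" assume p: "p \<in> mono_ideal (up_closure A)"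
    have "Poly_Mapping.single \<beta> (Poly_Mapping.lookup p \<beta>) \<in> ideal_gen (monom1 ` A)"
      if \<beta>: "\<beta> \<in> Poly_Mapping.keys p" for \<beta>
    proof -
      obtain \<alpha> where \<alpha>: "\<alpha> \<in> A" "Poly_Mapping.lookup \<alpha> \<le> Poly_Mapping.lookup \<beta>"
        using p \<beta> unfolding mono_ideal_def up_closure_def by blast
      have "(\<beta> - \<alpha>) + \<alpha> = \<beta>"
        using \<alpha>(2) by (intro poly_mapping_eqI) (simp add: lookup_add lookup_minus le_fun_def)
      then have "Poly_Mapping.single \<beta> (Poly_Mapping.lookup p \<beta>)
          = Poly_Mapping.single (\<beta> - \<alpha>) (Poly_Mapping.lookup p \<beta>) * monom1 \<alpha>"
        by (simp add: monom1_def mult_single)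
      moreover have "monom1 \<alpha> \<in> ideal_gen (monom1 ` A)"
        using \<alpha>(1) by (intro ideal_gen_base) simp
      ultimately show ?thesis
        by (metis ideal_gen_mult)
    qed
    then have "(\<Sum>\<beta>\<in>Poly_Mapping.keys p. Poly_Mapping.single \<beta> (Poly_Mapping.lookup p \<beta>))
        \<in> ideal_gen (monom1 ` A)"
      by (simp add: ideal_gen_sum)
    then show "p \<in> ideal_gen (monom1 ` A)"
      using poly_mapping_expansion[of p] by simp
  qed
qed

lemma mono_ideal_eq_ideal_gen:
  assumes "up_closed U"
  shows "mono_ideal U = ideal_gen (monom1 ` {\<beta>. Poly_Mapping.lookup \<beta> \<in> U} :: ('v::finite, 'k::comm_ring_1) mpoly set)"
proof -
  have "up_closure {\<beta>. Poly_Mapping.lookup \<beta> \<in> U} = U"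
  proof (intro equalityI subsetI)
    fix f assume "f \<in> U"
    moreover obtain \<beta> :: "'v \<Rightarrow>\<^sub>0 nat" where "Poly_Mapping.lookup \<beta> = f"
      using ex_lookup_eq by blast
    ultimately show "f \<in> up_closure {\<beta>. Poly_Mapping.lookup \<beta> \<in> U}"
      unfolding up_closure_def by auto
  qed (use assms in \<open>auto simp: up_closure_def up_closed_def\<close>)
  then show ?thesis by (simp add: ideal_gen_monom1)
qed

lemma mono_ideal_inject:
  assumes "(mono_ideal U :: ('v::finite, 'k::comm_ring_1) mpoly set) = mono_ideal V"
  shows "U = V"
proof -
  have "f \<in> U \<longleftrightarrow> f \<in> V" for f
  proof -
    obtain \<beta> :: "'v \<Rightarrow>\<^sub>0 nat" where "Poly_Mapping.lookup \<beta> = f" using ex_lookup_eq by blast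
    then show ?thesis
      using monom1_in_mono_ideal[of \<beta> U, where 'k='k] monom1_in_mono_ideal[of \<beta> V, where 'k='k] assms
      by simp
  qed
  then show ?thesis by blast
qed

lemma colon_mono_ideal_monom1:
  "colon (mono_ideal U :: ('v, 'k::comm_ring_1) mpoly set) (monom1 \<gamma>)
    = mono_ideal {f. f + Poly_Mapping.lookup \<gamma> \<in> U}"
  unfolding colon_def mono_ideal_def monom1_def by (auto simp: keys_mult_single lookup_plus)

definition sum_pow :: "('v \<Rightarrow> nat) set \<Rightarrow> nat \<Rightarrow> ('v \<Rightarrow> nat) set" where
  "sum_pow U k = {f. \<exists>xs. length xs = k \<and> set xs \<subseteq> U \<and> sum_list xs \<le> f}"

lemma up_closed_sum_pow: "up_closed (sum_pow U k)"
  unfolding up_closed_def sum_pow_def using order_trans by blast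

lemma sum_pow_mono: "f \<in> sum_pow U k \<Longrightarrow> f \<le> g \<Longrightarrow> g \<in> sum_pow U k"
  using up_closed_sum_pow unfolding up_closed_def by blast

lemma sum_pow_Suc:
  assumes "r \<in> U" "f \<in> sum_pow U k"
  shows "r + f \<in> sum_pow U (Suc k)"
proof -
  obtain xs where "length xs = k" "set xs \<subseteq> U" "sum_list xs \<le> f"
    using assms(2) unfolding sum_pow_def by blast
  then show ?thesis
    unfolding sum_pow_def using assms(1) by (intro CollectI exI[of _ "r # xs"]) (auto intro: add_left_mono)
qed

lemma mult_mem_mono_ideal_sum_pow:
  assumes "p \<in> mono_ideal (sum_pow U k)" "q \<in> mono_ideal U"
  shows "q * p \<in> mono_ideal (sum_pow U (Suc k))"
  unfolding mono_ideal_def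
proof (intro CollectI ballI)
  fix m assume "m \<in> Poly_Mapping.keys (q * p)"
  then obtain \<alpha> \<beta> where m: "m = \<alpha> + \<beta>" "\<alpha> \<in> Poly_Mapping.keys q" "\<beta> \<in> Poly_Mapping.keys p"
    using keys_mult by blast
  then show "Poly_Mapping.lookup m \<in> sum_pow U (Suc k)"
    using assms sum_pow_Suc[of "Poly_Mapping.lookup \<alpha>" U "Poly_Mapping.lookup \<beta>" k]
    unfolding mono_ideal_def by (simp add: lookup_plus)
qed

lemma prod_list_mem_mono_ideal_sum_pow:
  "set ps \<subseteq> mono_ideal U \<Longrightarrow> prod_list ps \<in> (mono_ideal (sum_pow U (length ps)) :: ('v, 'k::comm_ring_1) mpoly set)"
proof (induction ps)
  case Nil
  show ?case by (simp add: sum_pow_def mono_ideal_def)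
next
  case (Cons p ps)
  then show ?case using mult_mem_mono_ideal_sum_pow by auto
qed

lemma monom1_mem_ideal_pow:
  assumes "Poly_Mapping.lookup \<beta> \<in> sum_pow U k"
  shows "(monom1 \<beta> :: ('v::finite, 'k::comm_ring_1) mpoly) \<in> ideal_pow (mono_ideal U) k"
proof -
  obtain fs where fs: "length fs = k" "set fs \<subseteq> U" "sum_list fs \<le> Poly_Mapping.lookup \<beta>"
    using assms unfolding sum_pow_def by blast
  define \<alpha>s :: "('v \<Rightarrow>\<^sub>0 nat) list" where "\<alpha>s = map Abs_poly_mapping fs"
  have lookup_\<alpha>s: "map Poly_Mapping.lookup \<alpha>s = fs"
    by (simp add: \<alpha>s_def comp_def)
  have "Poly_Mapping.lookup (sum_list \<alpha>s) = sum_list fs"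
    unfolding lookup_\<alpha>s[symmetric] by (induction \<alpha>s) (simp_all add: lookup_plus)
  then have "(\<beta> - sum_list \<alpha>s) + sum_list \<alpha>s = \<beta>"
    using fs(3) by (intro poly_mapping_eqI) (simp add: lookup_add lookup_minus le_fun_def)
  then have \<beta>: "(monom1 \<beta> :: ('v, 'k) mpoly) = monom1 (\<beta> - sum_list \<alpha>s) * prod_list (map monom1 \<alpha>s)"
    by (metis monom1_add prod_list_monom1)
  have "set (map monom1 \<alpha>s) \<subseteq> (mono_ideal U :: ('v, 'k) mpoly set)"
    using fs(2) unfolding lookup_\<alpha>s[symmetric] by auto
  moreover have "length (map monom1 \<alpha>s) = k"
    using fs(1) by (simp add: \<alpha>s_def)
  ultimately have "prod_list (map monom1 \<alpha>s) \<in> ideal_pow (mono_ideal U :: ('v, 'k) mpoly set) k"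
    unfolding ideal_pow_def by (intro ideal_gen_base) blast
  then show ?thesis
    unfolding \<beta> ideal_pow_def by (rule ideal_gen_mult)
qed

lemma ideal_pow_mono_ideal:
  assumes "up_closed U"
  shows "ideal_pow (mono_ideal U :: ('v::finite, 'k::comm_ring_1) mpoly set) k = mono_ideal (sum_pow U k)"
proof
  show "ideal_pow (mono_ideal U :: ('v, 'k) mpoly set) k \<subseteq> mono_ideal (sum_pow U k)"
    unfolding ideal_pow_def
    by (rule ideal_gen_subset_mono_ideal[OF up_closed_sum_pow]) (auto dest: prod_list_mem_mono_ideal_sum_pow)
  show "mono_ideal (sum_pow U k) \<subseteq> ideal_pow (mono_ideal U :: ('v, 'k) mpoly set) k"
    unfolding mono_ideal_eq_ideal_gen[OF up_closed_sum_pow]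
    by (auto simp: ideal_pow_def intro!: ideal_gen_subset monom1_mem_ideal_pow[unfolded ideal_pow_def])
qed

section \<open>Powers of the edge ideal\<close>

definition edge_vec :: "'v set \<Rightarrow> 'v \<Rightarrow> nat" where
  "edge_vec e = (\<lambda>v. if v \<in> e then 1 else 0)"

definition unit_vec :: "'v \<Rightarrow> 'v \<Rightarrow> nat" where
  "unit_vec x = (\<lambda>v. if v = x then 1 else 0)"

definition edges_vec :: "'v set multiset \<Rightarrow> 'v \<Rightarrow> nat" where
  "edges_vec F = (\<Sum>e\<in>#F. edge_vec e)"

definition in_edge_pow :: "'v set set \<Rightarrow> nat \<Rightarrow> ('v \<Rightarrow> nat) \<Rightarrow> bool" where
  "in_edge_pow E k f \<longleftrightarrow> (\<exists>F. size F = k \<and> set_mset F \<subseteq> E \<and> edges_vec F \<le> f)"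

lemma edges_vec_empty [simp]: "edges_vec {#} = 0"
  by (simp add: edges_vec_def)

lemma edges_vec_add_mset [simp]: "edges_vec (add_mset e F) = edge_vec e + edges_vec F"
  by (simp add: edges_vec_def)

lemma edges_vec_union [simp]: "edges_vec (F + G) = edges_vec F + edges_vec G"
  by (simp add: edges_vec_def)

lemma sum_mset_apply: "(\<Sum>x\<in>#M. w x) v = (\<Sum>x\<in>#M. w x v)"
  by (induction M) auto

lemma edge_vec_doubleton: "x \<noteq> y \<Longrightarrow> edge_vec {x, y} = unit_vec x + unit_vec y"
  by (auto simp: edge_vec_def unit_vec_def fun_eq_iff)

lemma simple_graph_edge_obtain:
  assumes "simple_graph E" "e \<in> E" "z \<in> e"
  obtains x where "e = {z, x}" "x \<noteq> z"
proof -
  obtain p q where "e = {p, q}" "p \<noteq> q"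
    using assms(1,2) unfolding simple_graph_def by (auto simp: card_2_iff)
  then show ?thesis using that assms(3) by (auto simp: insert_commute)
qed

lemma simple_graph_edge_eq:
  assumes "simple_graph E" "e \<in> E" "x \<in> e" "y \<in> e" "x \<noteq> y"
  shows "e = {x, y}"
  using simple_graph_edge_obtain[OF assms(1-3)] assms(4,5) by auto

lemma in_edge_pow_add: "in_edge_pow E k f \<Longrightarrow> in_edge_pow E l g \<Longrightarrow> in_edge_pow E (k + l) (f + g)"
  unfolding in_edge_pow_def by (metis add_mono edges_vec_union size_union set_mset_union Un_subset_iff)

lemma in_edge_pow_mono: "in_edge_pow E k f \<Longrightarrow> f \<le> g \<Longrightarrow> in_edge_pow E k g"
  unfolding in_edge_pow_def using order_trans by blast

lemma in_edge_pow_edges_vec: "set_mset F \<subseteq> E \<Longrightarrow> in_edge_pow E (size F) (edges_vec F)"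
  unfolding in_edge_pow_def by blast

lemma in_edge_pow_edge: "e \<in> E \<Longrightarrow> in_edge_pow E 1 (edge_vec e)"
  using in_edge_pow_edges_vec[of "{#e#}" E] by simp

lemma in_edge_pow_two_obtain:
  assumes "in_edge_pow E 2 f"
  obtains e e' where "e \<in> E" "e' \<in> E" "edge_vec e + edge_vec e' \<le> f"
proof -
  obtain F where F: "size F = 2" "set_mset F \<subseteq> E" "edges_vec F \<le> f"
    using assms unfolding in_edge_pow_def by blast
  obtain e F1 where "F = add_mset e F1" "size F1 = 1"
    using F(1) by (cases F) auto
  then obtain e' where "F = {#e, e'#}"
    using size_1_singleton_mset by blast
  then show thesis
    using that F(2,3) by auto
qed

lemma in_edge_pow_complete:
  assumes "set_mset P \<subseteq> E" "U \<subseteq># P" "in_edge_pow E (size U + m) (f + edges_vec U)"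
  shows "in_edge_pow E (size P + m) (f + edges_vec P)"
proof -
  have "in_edge_pow E (size (P - U)) (edges_vec (P - U))"
    using assms(1) by (intro in_edge_pow_edges_vec) (auto dest: in_diffD)
  from in_edge_pow_add[OF assms(3) this] show ?thesis
    using assms(2) by (metis subset_mset.add_diff_inverse size_union edges_vec_union add.assoc add.commute)
qed

lemma sum_pow_edge_vecs: "sum_pow {f. \<exists>e\<in>E. edge_vec e \<le> f} k = {f. in_edge_pow E k f}"
proof (intro equalityI subsetI CollectI)
  fix f assume "f \<in> sum_pow {f. \<exists>e\<in>E. edge_vec e \<le> f} k"
  then obtain fs where fs: "length fs = k" "set fs \<subseteq> {f. \<exists>e\<in>E. edge_vec e \<le> f}" "sum_list fs \<le> f"
    unfolding sum_pow_def by blast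
  have "in_edge_pow E (length fs) (sum_list fs)"
    using fs(2)
  proof (induction fs)
    case Nil
    show ?case by (simp add: in_edge_pow_def)
  next
    case (Cons g fs)
    then obtain e where "e \<in> E" "edge_vec e \<le> g" by auto
    then have "in_edge_pow E 1 g" by (blast intro: in_edge_pow_mono in_edge_pow_edge)
    moreover have "in_edge_pow E (length fs) (sum_list fs)" using Cons by simp
    ultimately have "in_edge_pow E (1 + length fs) (g + sum_list fs)" by (rule in_edge_pow_add)
    then show ?case by (simp add: plus_fun_def)
  qed
  then show "in_edge_pow E k f"
    using fs(1,3) by (auto intro: in_edge_pow_mono)
next
  fix f assume "f \<in> {f. in_edge_pow E k f}"
  then obtain F where F: "size F = k" "set_mset F \<subseteq> E" "edges_vec F \<le> f"
    unfolding in_edge_pow_def by blast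
  obtain es where es: "mset es = F" using ex_mset by blast
  have "sum_list (map edge_vec es) = edges_vec F"
    by (simp add: edges_vec_def sum_mset_sum_list[symmetric] es[symmetric])
  then show "f \<in> sum_pow {f. \<exists>e\<in>E. edge_vec e \<le> f} k"
    unfolding sum_pow_def using F es by (intro CollectI exI[of _ "map edge_vec es"]) auto
qed

definition edge_exp :: "'v set \<Rightarrow> 'v \<Rightarrow>\<^sub>0 nat" where
  "edge_exp e = (\<Sum>v\<in>e. Poly_Mapping.single v 1)"

lemma lookup_edge_exp: "Poly_Mapping.lookup (edge_exp (e :: 'v::finite set)) = edge_vec e"
  by (rule ext) (simp add: edge_exp_def edge_vec_def lookup_sum lookup_single when_def)

lemma edge_mon_eq_monom1: "edge_mon e = monom1 (edge_exp e)"
  by (simp add: edge_mon_def edge_exp_def)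

lemma ideal_pow_edge_ideal:
  "ideal_pow (edge_ideal E :: ('v::finite, 'k::comm_ring_1) mpoly set) k = mono_ideal {f. in_edge_pow E k f}"
proof -
  have "edge_ideal E = (mono_ideal {f. \<exists>e\<in>E. edge_vec e \<le> f} :: ('v, 'k) mpoly set)"
    unfolding edge_ideal_def edge_mon_eq_monom1 image_image[of monom1 edge_exp, symmetric]
    by (auto simp: ideal_gen_monom1 up_closure_def lookup_edge_exp)
  moreover have "up_closed {f. \<exists>e\<in>E. edge_vec e \<le> f}"
    unfolding up_closed_def using order_trans by blast
  ultimately show ?thesis
    by (simp add: ideal_pow_mono_ideal sum_pow_edge_vecs)
qed

lemma colon_prod_mset_edge_mon:
  "colon (mono_ideal U :: ('v::finite, 'k::comm_ring_1) mpoly set) (\<Prod>e\<in>#F. edge_mon e)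
    = mono_ideal {f. f + edges_vec F \<in> U}"
proof -
  have "(\<Prod>e\<in>#F. edge_mon e) = (monom1 (\<Sum>e\<in>#F. edge_exp e) :: ('v, 'k) mpoly)"
    by (induction F) (simp_all add: edge_mon_eq_monom1 monom1_add, simp add: monom1_def)
  moreover have "Poly_Mapping.lookup (\<Sum>e\<in>#F. edge_exp e) = edges_vec F"
    by (induction F) (simp_all add: lookup_plus lookup_edge_exp)
  ultimately show ?thesis
    by (simp add: colon_mono_ideal_monom1)
qed

lemma colon_edge_mon:
  "colon (mono_ideal U :: ('v::finite, 'k::comm_ring_1) mpoly set) (edge_mon e)
    = mono_ideal {f. f + edge_vec e \<in> U}"
  using colon_prod_mset_edge_mon[of U "{#e#}"] by simp

section \<open>Dividing a power of the edge ideal by an edge\<close>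

definition edge_sq_colon :: "'v set set \<Rightarrow> 'v set \<Rightarrow> ('v \<Rightarrow> nat) set" where
  "edge_sq_colon E e = {r. in_edge_pow E 2 (r + edge_vec e)}"

lemma up_closed_edge_sq_colon: "up_closed (edge_sq_colon E e)"
  unfolding edge_sq_colon_def up_closed_def by (auto intro: in_edge_pow_mono add_right_mono)

lemma edges_vec_pos: "0 < edges_vec F v \<Longrightarrow> \<exists>f\<in>#F. v \<in> f"
  by (induction F) (auto simp: edge_vec_def split: if_splits)

lemma sum_mset_remove_le_add_unit_vec:
  fixes w :: "'a \<Rightarrow> 'v \<Rightarrow> nat"
  assumes le: "(\<Sum>x\<in>#M. w x) \<le> D + unit_vec z" and "M \<noteq> {#}"
  shows "\<exists>x\<in>#M. (\<Sum>y\<in>#M - {#x#}. w y) \<le> D"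
proof (cases "(\<Sum>x\<in>#M. w x) z \<le> D z")
  case True
  obtain x M' where M: "M = add_mset x M'"
    using \<open>M \<noteq> {#}\<close> by (metis multi_nonempty_split)
  have "(\<Sum>y\<in>#M'. w y) \<le> D"
  proof (rule le_funI)
    fix v
    have "(\<Sum>y\<in>#M'. w y) v \<le> (\<Sum>y\<in>#M. w y) v"
      by (simp add: M)
    also have "\<dots> \<le> D v"
      using le_funD[OF le, of v] True by (cases "v = z") (simp_all add: unit_vec_def)
    finally show "(\<Sum>y\<in>#M'. w y) v \<le> D v" .
  qed
  then show ?thesis by (auto simp: M)
next
  case False
  then have "(\<Sum>x\<in>#M. w x z) \<noteq> 0"
    using sum_mset_apply[of w M z] by linarith
  then obtain x where x: "x \<in># M" "w x z \<noteq> 0"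
    by auto
  then obtain M' where M: "M = add_mset x M'"
    by (metis multi_member_split)
  have "(\<Sum>y\<in>#M'. w y) \<le> D"
  proof (rule le_funI)
    fix v
    have "w x v + (\<Sum>y\<in>#M'. w y) v \<le> D v + unit_vec z v"
      using le by (simp add: M le_fun_def)
    then show "(\<Sum>y\<in>#M'. w y) v \<le> D v"
      using x(2) by (cases "v = z") (auto simp: unit_vec_def)
  qed
  then show ?thesis using x(1) by (auto simp: M)
qed

lemma in_edge_pow_imp_sum_pow_colon:
  assumes "{a, b} \<in> E" "in_edge_pow E k f"
  shows "f \<in> sum_pow (edge_sq_colon E {a, b}) k"
proof -
  obtain F where F: "size F = k" "set_mset F \<subseteq> E" "edges_vec F \<le> f"
    using assms(2) unfolding in_edge_pow_def by blast
  have "edges_vec F \<in> sum_pow (edge_sq_colon E {a, b}) (size F)"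
    using F(2)
  proof (induction F)
    case empty
    show ?case by (simp add: sum_pow_def)
  next
    case (add e F)
    have "in_edge_pow E (size {#e, {a, b}#}) (edges_vec {#e, {a, b}#})"
      using add.prems assms(1) by (intro in_edge_pow_edges_vec) auto
    then have "edge_vec e \<in> edge_sq_colon E {a, b}"
      by (simp add: edge_sq_colon_def numeral_2_eq_2)
    moreover have "edges_vec F \<in> sum_pow (edge_sq_colon E {a, b}) (size F)"
      using add by simp
    ultimately show ?case
      unfolding edges_vec_add_mset size_add_mset by (rule sum_pow_Suc)
  qed
  then show ?thesis
    using F by (auto intro: sum_pow_mono)
qed

lemma le_add_edge_vec_cases:
  assumes le: "f \<le> D + edge_vec {x, y}" and "x \<noteq> y"
  obtains "f \<le> D + unit_vec x" | "f \<le> D + unit_vec y" | "D x < f x" "D y < f y"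
proof -
  have pt: "f v \<le> D v + unit_vec x v + unit_vec y v" for v
    using le_funD[OF le, of v] \<open>x \<noteq> y\<close> by (simp add: edge_vec_doubleton)
  consider "f x \<le> D x" | "f y \<le> D y" | "D x < f x" "D y < f y"
    by linarith
  then show ?thesis
  proof cases
    case 1
    have "f \<le> D + unit_vec y"
    proof (rule le_funI)
      fix v
      show "f v \<le> (D + unit_vec y) v"
        using pt[of v] 1 by (cases "v = x") (auto simp: unit_vec_def)
    qed
    then show ?thesis by (rule that(2))
  next
    case 2
    have "f \<le> D + unit_vec x"
    proof (rule le_funI)
      fix v
      show "f v \<le> (D + unit_vec x) v"
        using pt[of v] 2 by (cases "v = y") (auto simp: unit_vec_def)
    qed
    then show ?thesis by (rule that(1))
  qed (rule that(3))
qed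

lemma edge_sq_colon_quotient:
  assumes "f1 \<in> E" "f2 \<in> E" "a \<in> f1" "b \<in> f2"
  obtains r where "r \<in> edge_sq_colon E {a, b}" "r + edge_vec {a, b} = edge_vec f1 + edge_vec f2"
proof -
  define r where "r v = edge_vec f1 v + edge_vec f2 v - edge_vec {a, b} v" for v
  have r: "r + edge_vec {a, b} = edge_vec f1 + edge_vec f2"
    using assms(3,4) by (auto simp: r_def edge_vec_def fun_eq_iff)
  have "in_edge_pow E (size {#f1, f2#}) (edges_vec {#f1, f2#})"
    using assms(1,2) by (intro in_edge_pow_edges_vec) auto
  then have "r \<in> edge_sq_colon E {a, b}"
    by (simp add: edge_sq_colon_def r numeral_2_eq_2)
  then show ?thesis using r by (rule that)
qed

lemma sum_pow_edge_sq_colon_drop: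
  assumes "{a, b} \<in> E" "set_mset F \<subseteq> E" "f \<in># F" "edges_vec (F - {#f#}) \<le> D"
  shows "D \<in> sum_pow (edge_sq_colon E {a, b}) (size F - 1)"
proof -
  have "in_edge_pow E (size F - 1) D"
    unfolding in_edge_pow_def using assms(2-4)
    by (intro exI[of _ "F - {#f#}"]) (auto simp: size_Diff_singleton dest: in_diffD)
  then show ?thesis by (rule in_edge_pow_imp_sum_pow_colon[OF assms(1)])
qed

lemma sum_pow_edge_sq_colon_of_excess:
  assumes G: "simple_graph E" and ab: "{a, b} \<in> E" "a \<noteq> b"
    and F: "set_mset F \<subseteq> E" "edges_vec F \<le> D + edge_vec {a, b}"
    and excess: "D a < edges_vec F a" "D b < edges_vec F b"
  shows "D \<in> sum_pow (edge_sq_colon E {a, b}) (size F - 1)"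
proof -
  obtain f1 where f1: "f1 \<in># F" "a \<in> f1"
    using excess(1) edges_vec_pos[of F a] by auto
  then obtain F1 where F1: "F = add_mset f1 F1"
    by (metis multi_member_split)
  show ?thesis
  proof (cases "b \<in> f1")
    case True
    then have "f1 = {a, b}"
      using simple_graph_edge_eq[OF G _ f1(2) True ab(2)] F(1) f1(1) by auto
    then have "edges_vec F1 \<le> D"
      using F(2) by (simp add: F1 add.commute)
    then show ?thesis
      using sum_pow_edge_sq_colon_drop[OF ab(1) F(1) f1(1)] by (simp add: F1)
  next
    case False
    obtain f2 where f2: "f2 \<in># F1" "b \<in> f2"
      using excess(2) False edges_vec_pos[of F1 b] by (auto simp: F1 edge_vec_def)
    then obtain G where F1_G: "F1 = add_mset f2 G"
      by (metis multi_member_split)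
    obtain r where r: "r \<in> edge_sq_colon E {a, b}" "r + edge_vec {a, b} = edge_vec f1 + edge_vec f2"
      using edge_sq_colon_quotient[of f1 E f2 a b] F(1) f1(2) f2(2) by (auto simp: F1 F1_G)
    have "(r + edges_vec G) + edge_vec {a, b} = (r + edge_vec {a, b}) + edges_vec G"
      by (simp only: ac_simps)
    then have "(r + edges_vec G) + edge_vec {a, b} \<le> D + edge_vec {a, b}"
      using F(2) by (simp add: r(2) F1 F1_G ac_simps)
    then have "r + edges_vec G \<le> D"
      by (rule add_le_imp_le_right)
    moreover have "edges_vec G \<in> sum_pow (edge_sq_colon E {a, b}) (size G)"
      using F(1) ab(1) by (intro in_edge_pow_imp_sum_pow_colon in_edge_pow_edges_vec) (auto simp: F1 F1_G)
    then have "r + edges_vec G \<in> sum_pow (edge_sq_colon E {a, b}) (size F - 1)"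
      using sum_pow_Suc[OF r(1)] by (simp add: F1 F1_G)
    ultimately show ?thesis
      by (metis sum_pow_mono)
  qed
qed

lemma in_edge_pow_Suc_imp_sum_pow_colon:
  assumes G: "simple_graph E" and ab: "{a, b} \<in> E" "a \<noteq> b"
    and "in_edge_pow E (Suc k) (D + edge_vec {a, b})"
  shows "D \<in> sum_pow (edge_sq_colon E {a, b}) k"
proof -
  obtain F where F: "size F = Suc k" "set_mset F \<subseteq> E" "edges_vec F \<le> D + edge_vec {a, b}"
    using assms(4) unfolding in_edge_pow_def by blast
  have drop_unit: ?thesis if le_z: "edges_vec F \<le> D + unit_vec z" for z
  proof -
    have "F \<noteq> {#}"
      using F(1) by auto
    then obtain f where "f \<in># F" "edges_vec (F - {#f#}) \<le> D"
      using sum_mset_remove_le_add_unit_vec[of edge_vec F D z] le_z by (auto simp: edges_vec_def)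
    then show ?thesis
      using sum_pow_edge_sq_colon_drop[OF ab(1) F(2)] F(1) by fastforce
  qed
  from F(3) ab(2) show ?thesis
  proof (cases rule: le_add_edge_vec_cases)
    case 3
    then show ?thesis
      using sum_pow_edge_sq_colon_of_excess[OF G ab F(2,3)] F(1) by simp
  qed (use drop_unit in blast)+
qed

section \<open>Walks through the edge $ab$\<close>

text \<open>In monomial terms, \<open>linked E A x y\<close> says that \<open>x y \<Prod>A \<in> I(G)^(|A|+1)\<close>; this
  holds when \<open>A\<close> is the set of even-indexed edges of an odd walk from \<open>x\<close> to \<open>y\<close>.\<close>

definition linked :: "'v set set \<Rightarrow> 'v set multiset \<Rightarrow> 'v \<Rightarrow> 'v \<Rightarrow> bool" where
  "linked E A x y \<longleftrightarrow> in_edge_pow E (size A + 1) (unit_vec x + unit_vec y + edges_vec A)"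

lemma linked_sym: "linked E A x y \<Longrightarrow> linked E A y x"
  unfolding linked_def by (simp add: ac_simps)

lemma linked_edge: "{x, y} \<in> E \<Longrightarrow> x \<noteq> y \<Longrightarrow> linked E {#} x y"
  unfolding linked_def using in_edge_pow_edge[of "{x, y}" E] by (simp add: edge_vec_doubleton)

lemma linked_join:
  assumes "linked E A p w" "linked E B w' q" "{w, w'} \<in> E" "w \<noteq> w'"
  shows "linked E (A + add_mset {w, w'} B) p q"
proof -
  have "in_edge_pow E ((size A + 1) + (size B + 1))
      ((unit_vec p + unit_vec w + edges_vec A) + (unit_vec w' + unit_vec q + edges_vec B))"
    using assms(1,2) unfolding linked_def by (rule in_edge_pow_add)
  then show ?thesis
    unfolding linked_def using assms(4) by (simp add: edge_vec_doubleton ac_simps)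
qed

text \<open>\<open>Link u v A\<close> is a walk from \<open>u\<close> to \<open>v\<close> in the sense of \<^const>\<open>linked\<close>;
  \<open>Via u x y v A B\<close> is a walk from \<open>u\<close> to \<open>x\<close>, then the edge \<open>xy = ab\<close>, then a walk
  from \<open>y\<close> to \<open>v\<close>.\<close>

datatype 'v link =
    Link 'v 'v "'v set multiset"
  | Via 'v 'v 'v 'v "'v set multiset" "'v set multiset"

fun link_start :: "'v link \<Rightarrow> 'v" where
  "link_start (Link u v A) = u"
| "link_start (Via u x y v A B) = u"

fun link_end :: "'v link \<Rightarrow> 'v" where
  "link_end (Link u v A) = v"
| "link_end (Via u x y v A B) = v"

fun link_edges :: "'v link \<Rightarrow> 'v set multiset" where
  "link_edges (Link u v A) = A"
| "link_edges (Via u x y v A B) = A + B"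

fun link_flip :: "'v link \<Rightarrow> 'v link" where
  "link_flip (Link u v A) = Link v u A"
| "link_flip (Via u x y v A B) = Via v y x u B A"

definition link_ends :: "'v link \<Rightarrow> 'v \<Rightarrow> nat" where
  "link_ends t = unit_vec (link_start t) + unit_vec (link_end t)"

lemma link_flip_simps [simp]:
  "link_start (link_flip t) = link_end t"
  "link_end (link_flip t) = link_start t"
  "link_edges (link_flip t) = link_edges t"
  "link_ends (link_flip t) = link_ends t"
  by (cases t; simp add: link_ends_def add.commute)+

lemma link_ends_pos: "0 < link_ends t z \<longleftrightarrow> link_start t = z \<or> link_end t = z"
  by (auto simp: link_ends_def unit_vec_def)

text \<open>In the theorem, \<open>ab\<close> is \<open>e\<^sub>i\<close> and \<open>P\<close> is the multiset of the other \<open>e\<^sub>j\<close>;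
  \<open>no_square\<close> says that no \<open>x\<^sup>2\<close> lies in \<open>(I(G)\<^sup>s\<^sup>+\<^sup>1 : e\<^sub>1\<cdots>e\<^sub>s)\<close>.\<close>

locale squarefree_colon =
  fixes E :: "'v set set" and a b :: 'v and P :: "'v set multiset"
  assumes simple: "simple_graph E"
    and ab_edge: "{a, b} \<in> E" and ab_neq: "a \<noteq> b"
    and P_edges: "set_mset P \<subseteq> E"
    and no_square: "\<And>x. \<not> in_edge_pow E (size P + 2)
                          (unit_vec x + unit_vec x + edges_vec P + edge_vec {a, b})"
begin

fun valid_link :: "'v link \<Rightarrow> bool" where
  "valid_link (Link u v A) \<longleftrightarrow> linked E A u v"
| "valid_link (Via u x y v A B) \<longleftrightarrow> {x, y} = {a, b} \<and> linked E A u x \<and> linked E B y v"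

lemma valid_link_flip: "valid_link t \<Longrightarrow> valid_link (link_flip t)"
  by (cases t) (auto simp: linked_sym insert_commute)

lemma in_edge_pow_close:
  assumes "U \<subseteq># P" "in_edge_pow E (size U + 2) (f + edges_vec U + edge_vec {a, b})"
  shows "in_edge_pow E (size P + 2) (f + edges_vec P + edge_vec {a, b})"
  using in_edge_pow_complete[OF P_edges assms(1), of 2 "f + edge_vec {a, b}"] assms(2)
  by (simp add: ac_simps)

lemma linked_add_ab:
  "linked E A x y \<Longrightarrow> in_edge_pow E (size A + 2) (unit_vec x + unit_vec y + edges_vec A + edge_vec {a, b})"
  unfolding linked_def using in_edge_pow_add[OF _ in_edge_pow_edge[OF ab_edge]] by fastforce

lemma not_linked_loop: "U \<subseteq># P \<Longrightarrow> \<not> linked E U y y"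
  using no_square in_edge_pow_close linked_add_ab by blast

lemma in_edge_pow_of_link:
  assumes "valid_link t" "link_edges t \<subseteq># P" "link_ends t \<le> \<beta>"
  shows "in_edge_pow E (size P + 2) (\<beta> + edges_vec P + edge_vec {a, b})"
proof -
  have "in_edge_pow E (size (link_edges t) + 2) (link_ends t + edges_vec (link_edges t) + edge_vec {a, b})"
  proof (cases t)
    case (Link u v A)
    then show ?thesis
      using assms(1) linked_add_ab by (simp add: link_ends_def)
  next
    case (Via u x y v A B)
    then have xy: "{x, y} = {a, b}" "x \<noteq> y" and A: "linked E A u x" and B: "linked E B y v"
      using assms(1) ab_neq by auto
    from A B have "in_edge_pow E ((size A + 1) + (size B + 1))
        ((unit_vec u + unit_vec x + edges_vec A) + (unit_vec y + unit_vec v + edges_vec B))"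
      unfolding linked_def by (rule in_edge_pow_add)
    then show ?thesis
      using Via xy(2) by (simp add: xy(1)[symmetric] link_ends_def edge_vec_doubleton ac_simps)
  qed
  then have "in_edge_pow E (size P + 2) (link_ends t + edges_vec P + edge_vec {a, b})"
    using assms(2) by (rule in_edge_pow_close[rotated])
  then show ?thesis
    by (rule in_edge_pow_mono) (simp add: assms(3) add_right_mono)
qed

lemma link_of_edge_sq_colon:
  assumes "r \<in> edge_sq_colon E {a, b}"
  obtains t where "valid_link t" "link_edges t = {#}" "link_ends t \<le> r"
proof -
  obtain f g where fg: "f \<in> E" "g \<in> E" "edge_vec f + edge_vec g \<le> r + edge_vec {a, b}"
    using assms in_edge_pow_two_obtain unfolding edge_sq_colon_def by blast
  note result = that
  have from_edge: thesis if "h \<in> E" "edge_vec h \<le> r" for h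
  proof -
    obtain p q where "h = {p, q}" "p \<noteq> q"
      using simple \<open>h \<in> E\<close> unfolding simple_graph_def by (auto simp: card_2_iff)
    then show thesis
      using that linked_edge[of p q E] result[of "Link p q {#}"]
      by (simp add: link_ends_def edge_vec_doubleton)
  qed
  show thesis
  proof (cases "edge_vec f \<le> r \<or> edge_vec g \<le> r")
    case True
    then show thesis using from_edge fg by blast
  next
    case False
    then obtain z z' where z: "r z < edge_vec f z" and z': "r z' < edge_vec g z'"
      by (auto simp: le_fun_def not_le)
    have pt: "edge_vec f v + edge_vec g v \<le> r v + edge_vec {a, b} v" for v
      using le_funD[OF fg(3)] by simp
    have "z \<in> f" "z \<notin> g" "z \<in> {a, b}" "z' \<in> g" "z' \<notin> f" "z' \<in> {a, b}"
      using z z' pt[of z] pt[of z'] by (auto simp: edge_vec_def split: if_splits)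
    then have zz': "{z, z'} = {a, b}" "z \<noteq> z'"
      using ab_neq by auto
    obtain x where x: "f = {z, x}" "x \<noteq> z"
      using simple_graph_edge_obtain[OF simple fg(1) \<open>z \<in> f\<close>] .
    obtain y where y: "g = {z', y}" "y \<noteq> z'"
      using simple_graph_edge_obtain[OF simple fg(2) \<open>z' \<in> g\<close>] .
    have "valid_link (Via x z z' y {#} {#})"
      using zz' x y fg(1,2) by (auto intro: linked_sym linked_edge simp: insert_commute)
    moreover have "(unit_vec x + unit_vec y) + edge_vec {a, b} = edge_vec f + edge_vec g"
      using x y zz'(2) by (simp add: zz'(1)[symmetric] edge_vec_doubleton ac_simps)
    then have "(unit_vec x + unit_vec y) + edge_vec {a, b} \<le> r + edge_vec {a, b}"
      using fg(3) by simp
    then have "link_ends (Via x z z' y {#} {#}) \<le> r"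
      by (simp add: link_ends_def add_le_imp_le_right)
    ultimately show thesis
      by (intro result) simp_all
  qed
qed

lemma link_join:
  assumes t1: "valid_link t1" "link_end t1 = w" and t2: "valid_link t2" "link_start t2 = w'"
    and w: "{w, w'} \<in> E" "w \<noteq> w'"
    and sub: "link_edges t1 + link_edges t2 + {#{w, w'}#} \<subseteq># P"
  obtains t where "valid_link t" "link_edges t \<subseteq># link_edges t1 + link_edges t2 + {#{w, w'}#}"
    "link_start t = link_start t1" "link_end t = link_end t2"
proof (cases t1; cases t2)
  fix u w1 A1 w2 v A2
  assume "t1 = Link u w1 A1" "t2 = Link w2 v A2"
  then show thesis
    using t1 t2 w linked_join by (intro that[of "Link u v (A1 + add_mset {w, w'} A2)"]) auto
next
  fix u w1 A1 w2 x y v A2 B2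
  assume "t1 = Link u w1 A1" "t2 = Via w2 x y v A2 B2"
  then show thesis
    using t1 t2 w linked_join by (intro that[of "Via u x y v (A1 + add_mset {w, w'} A2) B2"]) auto
next
  fix u x y w1 A1 B1 w2 v A2
  assume "t1 = Via u x y w1 A1 B1" "t2 = Link w2 v A2"
  then show thesis
    using t1 t2 w linked_join by (intro that[of "Via u x y v A1 (B1 + add_mset {w, w'} A2)"]) auto
next
  fix u x y w1 A1 B1 w2 x' y' v A2 B2
  assume t1_Via: "t1 = Via u x y w1 A1 B1" and t2_Via: "t2 = Via w2 x' y' v A2 B2"
  \<comment> \<open>If the two walks crossed \<open>ab\<close> in opposite directions, \<open>B1\<close>, \<open>ww'\<close> and \<open>A2\<close> would close up.\<close>
  have "x' \<noteq> y"
  proof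
    assume "x' = y"
    then have "linked E (B1 + add_mset {w, w'} A2) y y"
      using t1 t2 w by (intro linked_join) (auto simp: t1_Via t2_Via)
    moreover have "B1 + add_mset {w, w'} A2 \<subseteq># P"
      using sub by (auto simp: t1_Via t2_Via intro: subset_mset.order_trans[rotated])
    ultimately show False
      using not_linked_loop by blast
  qed
  then have "x' = x" "y' = y"
    using t1 t2 ab_neq by (auto simp: t1_Via t2_Via doubleton_eq_iff)
  then show thesis
    using t1 t2 by (intro that[of "Via u x y v A1 B2"]) (auto simp: t1_Via t2_Via)
qed

lemma link_join_at:
  assumes t1: "valid_link t1" "0 < link_ends t1 w" and t2: "valid_link t2" "0 < link_ends t2 w'"
    and w: "{w, w'} \<in> E" "w \<noteq> w'"
    and sub: "link_edges t1 + link_edges t2 + {#{w, w'}#} \<subseteq># P"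
  obtains t where "valid_link t" "link_edges t \<subseteq># link_edges t1 + link_edges t2 + {#{w, w'}#}"
    "link_ends t + edge_vec {w, w'} = link_ends t1 + link_ends t2"
proof -
  define t1' where "t1' = (if link_end t1 = w then t1 else link_flip t1)"
  define t2' where "t2' = (if link_start t2 = w' then t2 else link_flip t2)"
  have t1': "valid_link t1'" "link_end t1' = w" "link_edges t1' = link_edges t1" "link_ends t1' = link_ends t1"
    using t1 valid_link_flip link_ends_pos[of t1 w] by (auto simp: t1'_def)
  have t2': "valid_link t2'" "link_start t2' = w'" "link_edges t2' = link_edges t2" "link_ends t2' = link_ends t2"
    using t2 valid_link_flip link_ends_pos[of t2 w'] by (auto simp: t2'_def)
  obtain t where t: "valid_link t" "link_edges t \<subseteq># link_edges t1 + link_edges t2 + {#{w, w'}#}"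
    "link_start t = link_start t1'" "link_end t = link_end t2'"
    using link_join[OF t1'(1,2) t2'(1,2) w] sub t1'(3) t2'(3) by metis
  have "link_ends t + edge_vec {w, w'} = link_ends t1' + link_ends t2'"
    using t(3,4) t1'(2) t2'(2) w(2) by (simp add: link_ends_def edge_vec_doubleton ac_simps)
  then show thesis
    using that t(1,2) t1'(4) t2'(4) by simp
qed

lemma links_absorb_edge_at_both_ends:
  assumes valid: "\<forall>t\<in>#ts. valid_link t"
    and sub: "(\<Sum>t\<in>#ts. link_edges t) + {#{w, w'}#} \<subseteq># P"
    and ends: "(\<Sum>t\<in>#ts. link_ends t) \<le> D + edge_vec {w, w'}"
    and w: "{w, w'} \<in> E" "w \<noteq> w'"
    and excess: "D w < (\<Sum>t\<in>#ts. link_ends t) w" "D w' < (\<Sum>t\<in>#ts. link_ends t) w'"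
  shows "\<exists>ts'. (\<forall>t\<in>#ts'. valid_link t) \<and> (\<Sum>t\<in>#ts'. link_edges t) \<subseteq># (\<Sum>t\<in>#ts. link_edges t) + {#{w, w'}#}
    \<and> size ts \<le> Suc (size ts') \<and> (\<Sum>t\<in>#ts'. link_ends t) + edge_vec {w, w'} = (\<Sum>t\<in>#ts. link_ends t)"
proof -
  have "(\<Sum>t\<in>#ts. link_ends t w) \<noteq> 0"
    using excess(1) sum_mset_apply[of link_ends ts w] by linarith
  then obtain t1 where t1: "t1 \<in># ts" "0 < link_ends t1 w"
    by auto
  then obtain ts1 where ts1: "ts = add_mset t1 ts1"
    by (metis multi_member_split)
  show ?thesis
  proof (cases "\<exists>t2\<in>#ts1. 0 < link_ends t2 w'")
    case True
    then obtain t2 ts2 where t2: "0 < link_ends t2 w'" and ts2: "ts1 = add_mset t2 ts2"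
      by (metis multi_member_split)
    have "link_edges t1 + link_edges t2 + {#{w, w'}#} \<subseteq># P"
      using sub by (auto simp: ts1 ts2 ac_simps intro: subset_mset.order_trans[rotated])
    moreover have "valid_link t1" "valid_link t2"
      using valid by (auto simp: ts1 ts2)
    ultimately obtain t where t: "valid_link t" "link_edges t \<subseteq># link_edges t1 + link_edges t2 + {#{w, w'}#}"
      and ends_t: "link_ends t + edge_vec {w, w'} = link_ends t1 + link_ends t2"
      using link_join_at[OF _ t1(2) _ t2 w] by blast
    have "(\<Sum>t\<in>#add_mset t ts2. link_ends t) + edge_vec {w, w'}
        = (link_ends t + edge_vec {w, w'}) + (\<Sum>t\<in>#ts2. link_ends t)"
      by (simp add: ac_simps)
    also have "\<dots> = (\<Sum>t\<in>#ts. link_ends t)"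
      unfolding ends_t by (simp add: ts1 ts2 ac_simps)
    finally have "(\<Sum>t\<in>#add_mset t ts2. link_ends t) + edge_vec {w, w'} = (\<Sum>t\<in>#ts. link_ends t)" .
    moreover have "(\<Sum>t\<in>#add_mset t ts2. link_edges t) \<subseteq># (\<Sum>t\<in>#ts. link_edges t) + {#{w, w'}#}"
      using t(2) by (simp add: ts1 ts2 ac_simps subset_mset.add_right_mono)
    ultimately show ?thesis
      using valid t(1) by (intro exI[of _ "add_mset t ts2"]) (auto simp: ts1 ts2)
  next
    case False
    then have "(\<Sum>t\<in>#ts1. link_ends t) w' = 0"
      by (auto simp: sum_mset_apply)
    then have "0 < link_ends t1 w'"
      using excess(2) by (simp add: ts1)
    then have "link_ends t1 = edge_vec {w, w'}"
      using t1(2) w(2) link_ends_pos[of t1] by (auto simp: link_ends_def edge_vec_doubleton add.commute)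
    then show ?thesis
      using valid by (intro exI[of _ ts1]) (auto simp: ts1 add.commute)
  qed
qed

lemma links_absorb_edge:
  assumes valid: "\<forall>t\<in>#ts. valid_link t"
    and sub: "(\<Sum>t\<in>#ts. link_edges t) + {#{w, w'}#} \<subseteq># P"
    and ends: "(\<Sum>t\<in>#ts. link_ends t) \<le> D + edge_vec {w, w'}"
    and w: "{w, w'} \<in> E" "w \<noteq> w'" and "ts \<noteq> {#}"
  shows "\<exists>ts'. (\<forall>t\<in>#ts'. valid_link t) \<and> (\<Sum>t\<in>#ts'. link_edges t) \<subseteq># (\<Sum>t\<in>#ts. link_edges t) + {#{w, w'}#}
    \<and> size ts \<le> Suc (size ts') \<and> (\<Sum>t\<in>#ts'. link_ends t) \<le> D"
proof -
  have drop_unit: ?thesis if le_z: "(\<Sum>t\<in>#ts. link_ends t) \<le> D + unit_vec z" for z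
  proof -
    obtain t where t: "t \<in># ts" "(\<Sum>t\<in>#ts - {#t#}. link_ends t) \<le> D"
      using sum_mset_remove_le_add_unit_vec[OF le_z \<open>ts \<noteq> {#}\<close>] by blast
    then obtain ts' where ts': "ts = add_mset t ts'"
      by (metis multi_member_split)
    have "(\<Sum>t\<in>#ts'. link_edges t) \<subseteq># link_edges t + (\<Sum>t\<in>#ts'. link_edges t) + {#{w, w'}#}"
      by (rule mset_subset_eq_add_left[THEN subset_mset.order_trans[OF mset_subset_eq_add_right]])
    then have "(\<Sum>t\<in>#ts'. link_edges t) \<subseteq># (\<Sum>t\<in>#ts. link_edges t) + {#{w, w'}#}"
      by (simp add: ts')
    then show ?thesis
      using valid t(2) by (intro exI[of _ ts']) (auto simp: ts')
  qed
  from ends w(2) show ?thesis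
  proof (cases rule: le_add_edge_vec_cases)
    case 3
    then obtain ts' where ts': "\<forall>t\<in>#ts'. valid_link t"
      "(\<Sum>t\<in>#ts'. link_edges t) \<subseteq># (\<Sum>t\<in>#ts. link_edges t) + {#{w, w'}#}"
      "size ts \<le> Suc (size ts')" "(\<Sum>t\<in>#ts'. link_ends t) + edge_vec {w, w'} = (\<Sum>t\<in>#ts. link_ends t)"
      using links_absorb_edge_at_both_ends[OF valid sub ends w] by blast
    then have "(\<Sum>t\<in>#ts'. link_ends t) + edge_vec {w, w'} \<le> D + edge_vec {w, w'}"
      using ends by simp
    then have "(\<Sum>t\<in>#ts'. link_ends t) \<le> D"
      by (rule add_le_imp_le_right)
    with ts' show ?thesis by blast
  qed (use drop_unit in blast)+
qed

lemma links_reduce: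
  assumes "\<forall>t\<in>#ts. valid_link t" "Q + (\<Sum>t\<in>#ts. link_edges t) \<subseteq># P" "size Q < size ts"
    and "(\<Sum>t\<in>#ts. link_ends t) \<le> \<beta> + edges_vec Q"
  shows "\<exists>t. valid_link t \<and> link_edges t \<subseteq># P \<and> link_ends t \<le> \<beta>"
  using assms
proof (induction Q arbitrary: ts)
  case empty
  then obtain t ts' where ts: "ts = add_mset t ts'"
    by (metis multi_nonempty_split size_empty less_irrefl)
  have "link_ends t \<le> (\<Sum>t\<in>#ts. link_ends t)"
    by (simp add: ts le_fun_def)
  then have "link_ends t \<le> \<beta>"
    using empty.prems(4) by simp
  moreover have "link_edges t \<subseteq># P"
    using empty.prems(2) by (auto simp: ts intro: subset_mset.order_trans[rotated])
  ultimately show ?case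
    using empty.prems(1) by (auto simp: ts)
next
  case (add e Q)
  then have "e \<in> E"
    using P_edges by (auto dest: mset_subset_eqD)
  then obtain w w' where e: "e = {w, w'}" "w \<noteq> w'"
    using simple unfolding simple_graph_def by (auto simp: card_2_iff)
  have "(\<Sum>t\<in>#ts. link_edges t) + {#e#} \<subseteq># P"
    using add.prems(2) by (auto simp: ac_simps intro: subset_mset.order_trans[rotated])
  moreover have "(\<Sum>t\<in>#ts. link_ends t) \<le> (\<beta> + edges_vec Q) + edge_vec e"
    using add.prems(4) by (simp only: edges_vec_add_mset ac_simps)
  moreover have "ts \<noteq> {#}"
    using add.prems(3) by auto
  ultimately obtain ts' where ts': "\<forall>t\<in>#ts'. valid_link t"
    "(\<Sum>t\<in>#ts'. link_edges t) \<subseteq># (\<Sum>t\<in>#ts. link_edges t) + {#e#}"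
    "size ts \<le> Suc (size ts')" "(\<Sum>t\<in>#ts'. link_ends t) \<le> \<beta> + edges_vec Q"
    using links_absorb_edge[OF add.prems(1)] \<open>e \<in> E\<close> e by blast
  have "Q + (\<Sum>t\<in>#ts'. link_edges t) \<subseteq># add_mset e Q + (\<Sum>t\<in>#ts. link_edges t)"
    using subset_mset.add_left_mono[OF ts'(2), of Q] by (simp add: ac_simps)
  then have "Q + (\<Sum>t\<in>#ts'. link_edges t) \<subseteq># P"
    using add.prems(2) by (rule subset_mset.order_trans)
  moreover have "size Q < size ts'"
    using add.prems(3) ts'(3) by simp
  ultimately show ?case
    using add.IH[OF ts'(1) _ _ ts'(4)] by blast
qed

lemma sum_pow_edge_sq_colon_imp_in_edge_pow:
  assumes "f + edges_vec P \<in> sum_pow (edge_sq_colon E {a, b}) (size P + 1)"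
  shows "in_edge_pow E (size P + 2) (f + edges_vec P + edge_vec {a, b})"
proof -
  obtain rs where rs: "length rs = size P + 1" "set rs \<subseteq> edge_sq_colon E {a, b}"
    "sum_list rs \<le> f + edges_vec P"
    using assms unfolding sum_pow_def by blast
  have "\<forall>r\<in>set rs. \<exists>t. valid_link t \<and> link_edges t = {#} \<and> link_ends t \<le> r"
  proof
    fix r assume "r \<in> set rs"
    then have "r \<in> edge_sq_colon E {a, b}" using rs(2) by blast
    then show "\<exists>t. valid_link t \<and> link_edges t = {#} \<and> link_ends t \<le> r"
      by (rule link_of_edge_sq_colon) blast
  qed
  then obtain pick where pick: "\<forall>r\<in>set rs. valid_link (pick r) \<and> link_edges (pick r) = {#} \<and> link_ends (pick r) \<le> r"
    by metis
  define ts where "ts = mset (map pick rs)"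
  have "(\<Sum>t\<in>#ts. link_ends t) = sum_list (map (link_ends \<circ> pick) rs)"
    by (simp add: ts_def sum_mset_sum_list[symmetric] image_mset.compositionality)
  also have "\<dots> \<le> sum_list rs"
    using sum_list_mono[of rs "link_ends \<circ> pick" "\<lambda>r. r"] pick by (simp add: comp_def)
  finally have "(\<Sum>t\<in>#ts. link_ends t) \<le> f + edges_vec P"
    using rs(3) by (rule order_trans)
  moreover have "(\<Sum>t\<in>#ts. link_edges t) = {#}"
    using pick by (auto simp: ts_def)
  moreover have "\<forall>t\<in>#ts. valid_link t" "size P < size ts"
    using pick rs(1) by (auto simp: ts_def)
  ultimately obtain t where "valid_link t" "link_edges t \<subseteq># P" "link_ends t \<le> f"
    using links_reduce[of ts P f] by auto
  then show ?thesis
    by (rule in_edge_pow_of_link)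
qed

lemma in_edge_pow_colon_iff:
  "in_edge_pow E (size P + 2) (f + edges_vec P + edge_vec {a, b})
    \<longleftrightarrow> f + edges_vec P \<in> sum_pow (edge_sq_colon E {a, b}) (size P + 1)"
proof
  assume "in_edge_pow E (size P + 2) (f + edges_vec P + edge_vec {a, b})"
  then show "f + edges_vec P \<in> sum_pow (edge_sq_colon E {a, b}) (size P + 1)"
    using in_edge_pow_Suc_imp_sum_pow_colon[OF simple ab_edge ab_neq, of "size P + 1"] by simp
qed (rule sum_pow_edge_sq_colon_imp_in_edge_pow)

end

definition vec_degree :: "('v::finite \<Rightarrow> nat) \<Rightarrow> nat" where
  "vec_degree f = (\<Sum>v\<in>UNIV. f v)"

lemma vec_degree_add: "vec_degree (f + g) = vec_degree f + vec_degree g"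
  by (simp add: vec_degree_def sum.distrib)

lemma vec_degree_mono: "f \<le> g \<Longrightarrow> vec_degree f \<le> vec_degree g"
  by (simp add: vec_degree_def le_fun_def sum_mono)

lemma vec_degree_unit_vec: "vec_degree (unit_vec (x :: 'v::finite)) = 1"
  by (simp add: vec_degree_def unit_vec_def sum.If_cases)

lemma vec_degree_edges_vec:
  assumes "simple_graph E" "set_mset F \<subseteq> E"
  shows "vec_degree (edges_vec (F :: 'v::finite set multiset)) = 2 * size F"
  using assms(2)
proof (induction F)
  case empty then show ?case by (simp add: vec_degree_def)
next
  case (add e F)
  have "vec_degree (edge_vec e) = card e"
    by (simp add: vec_degree_def edge_vec_def sum.If_cases)
  moreover have "card e = 2"
    using add.prems assms(1) by (simp add: simple_graph_def)
  ultimately show ?case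
    unfolding edges_vec_add_mset vec_degree_add using add by simp
qed

lemma in_edge_pow_vec_degree:
  "simple_graph E \<Longrightarrow> in_edge_pow E k (f :: 'v::finite \<Rightarrow> nat) \<Longrightarrow> 2 * k \<le> vec_degree f"
  unfolding in_edge_pow_def by (metis vec_degree_edges_vec vec_degree_mono)

lemma squarefree_mono_ideal_unit_vec:
  assumes "squarefree_monomial_ideal (mono_ideal U :: ('v::finite, 'k::comm_ring_1) mpoly set)"
    and "unit_vec x + unit_vec x \<in> U"
  shows "unit_vec x \<in> U"
proof -
  obtain A where A: "\<forall>\<alpha>\<in>A. \<forall>v. Poly_Mapping.lookup \<alpha> v \<le> 1"
    and "(mono_ideal U :: ('v, 'k) mpoly set) = ideal_gen (monom1 ` A)"
    using assms(1) unfolding squarefree_monomial_ideal_def by blast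
  then have U: "U = up_closure A"
    by (metis ideal_gen_monom1 mono_ideal_inject)
  then obtain \<alpha> where \<alpha>: "\<alpha> \<in> A" "Poly_Mapping.lookup \<alpha> \<le> unit_vec x + unit_vec x"
    using assms(2) unfolding up_closure_def by blast
  have "Poly_Mapping.lookup \<alpha> \<le> unit_vec x"
  proof (rule le_funI)
    fix v
    have "Poly_Mapping.lookup \<alpha> v \<le> 1" "Poly_Mapping.lookup \<alpha> v \<le> unit_vec x v + unit_vec x v"
      using A \<alpha> by (auto simp: le_fun_def)
    then show "Poly_Mapping.lookup \<alpha> v \<le> unit_vec x v"
      by (auto simp: unit_vec_def split: if_splits)
  qed
  then show ?thesis
    unfolding U up_closure_def using \<alpha>(1) by blast
qed

lemma colon_ideal_pow_edge_ideal:
  "colon (ideal_pow (edge_ideal E :: ('v::finite, 'k::comm_ring_1) mpoly set) k) (prod_list (map edge_mon es))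
    = mono_ideal {f. in_edge_pow E k (f + edges_vec (mset es))}"
proof -
  have "prod_list (map edge_mon es) = (\<Prod>e\<in>#mset es. edge_mon e :: ('v, 'k) mpoly)"
    by (simp flip: prod_mset_prod_list)
  then show ?thesis
    by (simp add: ideal_pow_edge_ideal colon_prod_mset_edge_mon)
qed

lemma colon_ideal_pow_edge_sq_colon:
  "colon (ideal_pow (colon (ideal_pow (edge_ideal E :: ('v::finite, 'k::comm_ring_1) mpoly set) 2) (edge_mon e)) k)
      (\<Prod>j\<in>S. edge_mon (g j))
    = mono_ideal {f. f + edges_vec (image_mset g (mset_set S)) \<in> sum_pow (edge_sq_colon E e) k}"
proof -
  have "colon (ideal_pow (edge_ideal E :: ('v, 'k) mpoly set) 2) (edge_mon e) = mono_ideal (edge_sq_colon E e)"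
    by (simp add: ideal_pow_edge_ideal colon_edge_mon edge_sq_colon_def)
  moreover have "(\<Prod>j\<in>S. edge_mon (g j)) = (\<Prod>e\<in>#image_mset g (mset_set S). edge_mon e :: ('v, 'k) mpoly)"
    by (simp add: prod_unfold_prod_mset image_mset.compositionality comp_def)
  ultimately show ?thesis
    by (simp add: ideal_pow_mono_ideal[OF up_closed_edge_sq_colon] colon_prod_mset_edge_mon)
qed

text \<open>A squarefree ideal containing \<open>x\<^sup>2\<close> contains \<open>x\<close>, which has too small a degree to
  lie in \<open>(I(G)\<^sup>k\<^sup>+\<^sup>1 : e\<^sub>1\<cdots>e\<^sub>k)\<close>.\<close>

lemma squarefree_colon_no_square:
  fixes E :: "'v::finite set set"
  assumes "simple_graph E" "set_mset Q \<subseteq> E"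
    and "squarefree_monomial_ideal
      (mono_ideal {f. in_edge_pow E (size Q + 1) (f + edges_vec Q)} :: ('v, 'k::comm_ring_1) mpoly set)"
  shows "\<not> in_edge_pow E (size Q + 1) (unit_vec x + unit_vec x + edges_vec Q)"
proof
  assume "in_edge_pow E (size Q + 1) (unit_vec x + unit_vec x + edges_vec Q)"
  then have "in_edge_pow E (size Q + 1) (unit_vec x + edges_vec Q)"
    using squarefree_mono_ideal_unit_vec[OF assms(3)] by simp
  then have "2 * (size Q + 1) \<le> vec_degree (unit_vec x + edges_vec Q)"
    by (rule in_edge_pow_vec_degree[OF assms(1)])
  then show False
    using assms(1,2) by (simp add: vec_degree_add vec_degree_unit_vec vec_degree_edges_vec)
qed

lemma mset_eq_add_mset_nth:
  assumes "i < length xs"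
  shows "mset xs = add_mset (xs ! i) (image_mset (nth xs) (mset_set {j. j < length xs \<and> j \<noteq> i}))"
proof -
  have "mset xs = image_mset (nth xs) (mset_set {..<length xs})"
    by (metis map_nth mset_map mset_upt lessThan_atLeast0)
  moreover have "{..<length xs} - {i} = {j. j < length xs \<and> j \<noteq> i}"
    by auto
  ultimately show ?thesis
    using mset_set.remove[of "{..<length xs}" i] assms by simp
qed

theorem theorem3p8:
  fixes E :: "('v::finite) set set" and es :: "'v set list" and s :: nat
  assumes "simple_graph E"
    and "s \<ge> 1" and "length es = s" and "set es \<subseteq> E"
    and "squarefree_monomial_ideal
           (colon (ideal_pow (edge_ideal E :: ('v, 'k::field) mpoly set) (s + 1))
                  (prod_list (map edge_mon es)))"
  shows "\<forall>i<s.
    colon (ideal_pow (edge_ideal E :: ('v, 'k) mpoly set) (s + 1)) (prod_list (map edge_mon es))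
    = colon (ideal_pow (colon (ideal_pow (edge_ideal E) 2) (edge_mon (es ! i))) s)
            (\<Prod>j\<in>{j. j < s \<and> j \<noteq> i}. edge_mon (es ! j))"
proof (intro allI impI)
  fix i assume i: "i < s"
  obtain a b where ab: "es ! i = {a, b}" "a \<noteq> b"
    using assms(1,3,4) i unfolding simple_graph_def by (metis card_2_iff nth_mem subsetD)
  define P where "P = image_mset (nth es) (mset_set {j. j < s \<and> j \<noteq> i})"
  have es: "mset es = add_mset {a, b} P"
    using mset_eq_add_mset_nth[of i es] i assms(3) ab(1) by (simp add: P_def)
  have s: "s = size P + 1"
    using arg_cong[OF es, of size] assms(3) by simp
  have E: "set_mset (add_mset {a, b} P) \<subseteq> E"
    using assms(4) unfolding es[symmetric] by simp
  have "squarefree_monomial_ideal (mono_ideal {f. in_edge_pow E (size (add_mset {a, b} P) + 1)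
      (f + edges_vec (add_mset {a, b} P))} :: ('v, 'k) mpoly set)"
    using assms(5) by (simp add: colon_ideal_pow_edge_ideal es s)
  note no_square = squarefree_colon_no_square[OF assms(1) E this]
  interpret squarefree_colon E a b P
    using assms(1) ab(2) E no_square by unfold_locales (simp_all add: ac_simps)
  have "colon (ideal_pow (edge_ideal E :: ('v, 'k) mpoly set) (s + 1)) (prod_list (map edge_mon es))
      = mono_ideal {f. in_edge_pow E (size P + 2) (f + edges_vec P + edge_vec {a, b})}"
    by (simp add: colon_ideal_pow_edge_ideal es s ac_simps)
  also have "\<dots> = mono_ideal {f. f + edges_vec P \<in> sum_pow (edge_sq_colon E {a, b}) (size P + 1)}"
    by (simp only: in_edge_pow_colon_iff)
  also have "\<dots> = colon (ideal_pow (colon (ideal_pow (edge_ideal E) 2) (edge_mon (es ! i))) s)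
      (\<Prod>j\<in>{j. j < s \<and> j \<noteq> i}. edge_mon (es ! j))"
    unfolding s[symmetric] by (simp add: colon_ideal_pow_edge_sq_colon ab(1) flip: P_def)
  finally show "colon (ideal_pow (edge_ideal E :: ('v, 'k) mpoly set) (s + 1)) (prod_list (map edge_mon es))
    = colon (ideal_pow (colon (ideal_pow (edge_ideal E) 2) (edge_mon (es ! i))) s)
            (\<Prod>j\<in>{j. j < s \<and> j \<noteq> i}. edge_mon (es ! j))" .
qed

end
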